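(* Let $\mathcal{B}$ be a building set on $[d]$ that is $\triangle$-closed, i.e. for all $I,J\in\mathcal{B}$ with $I\not\subseteq J$, $J\not\subseteq I$ and $I\cap J\neq\emptyset$ one has $I\triangle J\in\mathcal{B}$. Then the nestohedron $\Delta_{\mathcal{B}}$ is inscribed.
   Context: A building set is a collection $\mathcal{B}$ of subsets of $[d]$ such that $I\cap J\neq\emptyset$ implies $I\cup J\in\mathcal{B}$ for all $I,J\in\mathcal{B}$. $I\triangle J=(I\setminus J)\cup(J\setminus I)$. For $I\subseteq[d]$, $\Delta_I=\mathrm{conv}(e_i:i\in I)$ and $\Delta_{\mathcal{B}}=\sum_{I\in\mathcal{B}}\Delta_I$ (Minkowski sum). A polytope is inscribed if all its vertices lie on a common sphere. *)

theory Defs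
  imports "HOL-Analysis.Analysis"
begin

text \<open>Ground set [d] is modelled as the finite type 'n (d = CARD('n)); R^d is real^'n.\<close>

definition building_set :: "'n set set \<Rightarrow> bool" where
  "building_set B \<longleftrightarrow> (\<forall>I\<in>B. \<forall>J\<in>B. I \<inter> J \<noteq> {} \<longrightarrow> I \<union> J \<in> B)"

definition symdiff_closed :: "'n set set \<Rightarrow> bool" where
  "symdiff_closed B \<longleftrightarrow> (\<forall>I\<in>B. \<forall>J\<in>B. \<not> I \<subseteq> J \<and> \<not> J \<subseteq> I \<and> I \<inter> J \<noteq> {}
      \<longrightarrow> (I - J) \<union> (J - I) \<in> B)"

definition simplex_face :: "'n::finite set \<Rightarrow> (real^'n) set" where
  "simplex_face I = convex hull ((\<lambda>i. axis i 1) ` I)"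

definition nestohedron :: "'n::finite set set \<Rightarrow> (real^'n) set" where
  "nestohedron B = {(\<Sum>I\<in>B. x I) | x. \<forall>I\<in>B. x I \<in> simplex_face I}"

definition inscribed :: "'a::euclidean_space set \<Rightarrow> bool" where
  "inscribed P \<longleftrightarrow> (\<exists>c r. \<forall>v. v extreme_point_of P \<longrightarrow> dist c v = r)"

end

theory Submission
  imports Defs
begin

text \<open>
  A vertex of \<open>\<Delta>\<^sub>B\<close> is \<open>v = \<Sum>\<^sub>I e_(m I)\<close> for a choice \<open>m I \<in> I\<close> with \<open>m I = m L\<close>
  whenever \<open>I \<subseteq> L\<close> and \<open>m L \<in> I\<close>: otherwise exchanging \<open>e_(m I)\<close> and \<open>e_(m L)\<close>
  between \<open>\<Delta>\<^sub>I\<close> and \<open>\<Delta>\<^sub>L\<close> moves \<open>v\<close> in both directions along a segment.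
  With \<open>c = \<Sum>\<^sub>I 1\<^sub>I\<close> one gets
  \<open>\<parallel>v - c\<parallel>\<^sup>2 - \<parallel>c\<parallel>\<^sup>2 = \<Sum>\<^sub>I \<Sum>\<^sub>J ([m I = m J] - [m J \<in> I] - [m I \<in> J])\<close>.
  The term of a disjoint or nested pair is \<open>0\<close> or \<open>-1\<close> regardless of \<open>m\<close>. For an
  overlapping pair \<open>I, J\<close> the sets \<open>I, J, I \<triangle> J\<close> pairwise overlap and their three
  terms add up to \<open>-2\<close>; since \<open>(I, J) \<mapsto> (I, I \<triangle> J)\<close> and \<open>(I, J) \<mapsto> (I \<triangle> J, J)\<close>
  are involutions of the overlapping pairs, these terms sum to \<open>-2/3\<close> times their
  number. Hence \<open>\<parallel>v - c\<parallel>\<close> is the same for every vertex.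
\<close>

definition minkowski_sum :: "'i set \<Rightarrow> ('i \<Rightarrow> 'a::real_vector set) \<Rightarrow> 'a set" where
  "minkowski_sum A S = {(\<Sum>i\<in>A. x i) | x. \<forall>i\<in>A. x i \<in> S i}"

lemma sum_fun_upd:
  fixes f :: "'i \<Rightarrow> 'a::ab_group_add"
  assumes "finite A" "i \<in> A"
  shows "sum (f(i := y)) A = sum f A - f i + y"
  using assms by (simp add: sum.remove sum.cong[of "A - {i}" _ "f(i := y)" f])

lemma minkowski_sum_replace_summand:
  assumes "finite A" "i \<in> A" "\<forall>k\<in>A. x k \<in> S k" "a \<in> S i"
  shows "sum x A - x i + a \<in> minkowski_sum A S"
  unfolding minkowski_sum_def
  using assms sum_fun_upd[OF assms(1,2), of x a, symmetric] by force

lemma extreme_point_of_minkowski_sum_summand: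
  assumes "finite A" "i \<in> A" "\<forall>k\<in>A. x k \<in> S k"
    and "sum x A extreme_point_of minkowski_sum A S"
  shows "x i extreme_point_of S i"
  unfolding extreme_point_of_def
proof (intro conjI ballI notI)
  show "x i \<in> S i" using assms by blast
next
  fix a b assume "a \<in> S i" "b \<in> S i" "x i \<in> open_segment a b"
  then have "(sum x A - x i) + x i \<in> open_segment ((sum x A - x i) + a) ((sum x A - x i) + b)"
    by (simp only: open_segment_translation_eq)
  moreover have "(sum x A - x i) + a \<in> minkowski_sum A S" "(sum x A - x i) + b \<in> minkowski_sum A S"
    using minkowski_sum_replace_summand assms \<open>a \<in> S i\<close> \<open>b \<in> S i\<close> by (simp_all add: diff_add_eq)
  ultimately show False
    using assms(4) by (simp add: extreme_point_of_def)
qed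

lemma extreme_point_of_minkowski_sum_exchange:
  assumes "finite A" "i \<in> A" "j \<in> A" "\<forall>k\<in>A. x k \<in> S k" "x i \<in> S j" "x j \<in> S i"
    and "sum x A extreme_point_of minkowski_sum A S"
  shows "x i = x j"
proof (rule ccontr)
  define d where "d = x i - x j"
  assume "x i \<noteq> x j"
  then have "sum x A + d \<noteq> sum x A - d"
    by (simp add: d_def algebra_simps flip: scaleR_2)
  then have "sum x A \<in> open_segment (sum x A + d) (sum x A - d)"
    using midpoint_in_open_segment[of "sum x A + d" "sum x A - d"]
    by (simp add: midpoint_def algebra_simps flip: scaleR_2)
  moreover have "sum x A + d \<in> minkowski_sum A S" "sum x A - d \<in> minkowski_sum A S"
    using minkowski_sum_replace_summand[OF assms(1,3,4,5)]
      minkowski_sum_replace_summand[OF assms(1,2,4,6)]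
    by (simp_all add: d_def algebra_simps)
  ultimately show False
    using assms(7) by (simp add: extreme_point_of_def)
qed

definition consistent_choice :: "'a set set \<Rightarrow> ('a set \<Rightarrow> 'a) \<Rightarrow> bool" where
  "consistent_choice B m \<longleftrightarrow>
     (\<forall>I\<in>B. m I \<in> I) \<and> (\<forall>I\<in>B. \<forall>L\<in>B. I \<subseteq> L \<and> m L \<in> I \<longrightarrow> m I = m L)"

lemma consistent_choiceD:
  assumes "consistent_choice B m"
  shows consistent_choice_mem: "I \<in> B \<Longrightarrow> m I \<in> I"
    and consistent_choice_nested: "I \<in> B \<Longrightarrow> L \<in> B \<Longrightarrow> I \<subseteq> L \<Longrightarrow> m L \<in> I \<Longrightarrow> m I = m L"
  using assms unfolding consistent_choice_def by blast+

definition overlapping_pairs :: "'a set set \<Rightarrow> ('a set \<times> 'a set) set" where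
  "overlapping_pairs B = {(I, J) \<in> B \<times> B. \<not> I \<subseteq> J \<and> \<not> J \<subseteq> I \<and> I \<inter> J \<noteq> {}}"

text \<open>The \<open>(I, J)\<close> term of \<open>\<parallel>v\<parallel>\<^sup>2 - 2 v \<bullet> c\<close> for \<open>v = \<Sum>\<^sub>I e_(m I)\<close> and \<open>c = \<Sum>\<^sub>I 1\<^sub>I\<close>.\<close>
definition pair_weight :: "('a set \<Rightarrow> 'a) \<Rightarrow> 'a set \<Rightarrow> 'a set \<Rightarrow> real" where
  "pair_weight m I J = of_bool (m I = m J) - of_bool (m J \<in> I) - of_bool (m I \<in> J)"

lemma pair_weight_commute: "pair_weight m I J = pair_weight m J I"
  unfolding pair_weight_def by auto

lemma pair_weight_not_overlapping:
  assumes "consistent_choice B m" "I \<in> B" "J \<in> B" "(I, J) \<notin> overlapping_pairs B"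
  shows "pair_weight m I J = (if I \<inter> J = {} then 0 else -1)"
proof -
  have mI: "m I \<in> I" and mJ: "m J \<in> J"
    using assms(1-3) by (simp_all add: consistent_choice_mem)
  have nested: "m X = m Y \<longleftrightarrow> m Y \<in> X" if "X \<in> B" "Y \<in> B" "X \<subseteq> Y" for X Y
    using consistent_choiceD[OF assms(1)] that by metis
  consider "I \<inter> J = {}" | "I \<subseteq> J" | "J \<subseteq> I"
    using assms(2-4) by (auto simp: overlapping_pairs_def)
  then show ?thesis
  proof cases
    case 1
    then have "m I \<notin> J" "m J \<notin> I" "m I \<noteq> m J"
      using mI mJ by auto
    with 1 show ?thesis
      by (simp add: pair_weight_def)
  next
    case 2
    then have "m I \<in> J" "I \<inter> J \<noteq> {}"
      using mI by auto
    with nested[OF assms(2,3) 2] show ?thesis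
      by (simp add: pair_weight_def)
  next
    case 3
    then have "m J \<in> I" "I \<inter> J \<noteq> {}"
      using mJ by auto
    with nested[OF assms(3,2) 3] show ?thesis
      by (simp add: pair_weight_def eq_commute)
  qed
qed

lemma pair_weight_symdiff_triangle:
  assumes "m X = m Y" "m X \<in> X \<inter> Y" "m Z \<in> Z" "Z = sym_diff X Y"
  shows "pair_weight m X Y + pair_weight m X Z + pair_weight m Y Z = -2"
  using assms unfolding pair_weight_def by (auto simp: of_bool_def)

text \<open>\<open>m (I \<union> J)\<close> lies in exactly two of \<open>I, J, I \<triangle> J\<close>, and both of them choose it.\<close>
lemma pair_weight_overlapping_triangle:
  assumes "building_set B" "symdiff_closed B" "consistent_choice B m"
    and "(I, J) \<in> overlapping_pairs B"
  shows "pair_weight m I J + pair_weight m I (sym_diff I J)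
           + pair_weight m (sym_diff I J) J = -2"
proof -
  let ?K = "sym_diff I J"
  have B: "I \<in> B" "J \<in> B" "?K \<in> B" "I \<union> J \<in> B"
    using assms(1,2,4) by (auto simp: overlapping_pairs_def building_set_def symdiff_closed_def)
  note choice = consistent_choice_mem[OF assms(3)]
  define t where "t = m (I \<union> J)"
  have chosen: "m X = t" if "X \<in> B" "X \<subseteq> I \<union> J" "t \<in> X" for X
    using consistent_choice_nested[OF assms(3) that(1) B(4) that(2)] that(3) by (simp add: t_def)
  have "t \<in> I \<union> J"
    using choice[OF B(4)] by (simp add: t_def)
  then consider "t \<in> I \<inter> J" | "t \<in> I - J" | "t \<in> J - I"
    by blast
  then show ?thesis
  proof cases
    case 1
    then have "m I = t" "m J = t"
      using chosen B by auto
    then have "pair_weight m I J + pair_weight m I ?K + pair_weight m J ?K = -2"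
      using 1 choice B by (intro pair_weight_symdiff_triangle) auto
    then show ?thesis
      using pair_weight_commute[of m J ?K] by linarith
  next
    case 2
    then have "m I = t" "m ?K = t"
      using chosen B by auto
    then have "pair_weight m I ?K + pair_weight m I J + pair_weight m ?K J = -2"
      using 2 choice B by (intro pair_weight_symdiff_triangle) auto
    then show ?thesis
      by linarith
  next
    case 3
    then have "m J = t" "m ?K = t"
      using chosen B by auto
    then have "pair_weight m J ?K + pair_weight m J I + pair_weight m ?K I = -2"
      using 3 choice B by (intro pair_weight_symdiff_triangle) auto
    then show ?thesis
      using pair_weight_commute[of m J I] pair_weight_commute[of m J ?K]
        pair_weight_commute[of m ?K I] by linarith
  qed
qed

lemma overlapping_pairs_symdiff:
  assumes "symdiff_closed B" "(I, J) \<in> overlapping_pairs B"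
  shows "(I, sym_diff I J) \<in> overlapping_pairs B"
    and "(sym_diff I J, J) \<in> overlapping_pairs B"
  using assms by (auto simp: overlapping_pairs_def symdiff_closed_def)

lemma sum_pair_weight_overlapping:
  fixes B :: "'a set set"
  assumes "finite B" "building_set B" "symdiff_closed B" "consistent_choice B m"
  shows "(\<Sum>(I, J)\<in>overlapping_pairs B. pair_weight m I J)
           = - 2/3 * real (card (overlapping_pairs B))"
proof -
  let ?P = "overlapping_pairs B" and ?w = "\<lambda>(I, J). pair_weight m I J"
  define left :: "'a set \<times> 'a set \<Rightarrow> _" where "left = (\<lambda>(I, J). (I, sym_diff I J))"
  define right :: "'a set \<times> 'a set \<Rightarrow> _" where "right = (\<lambda>(I, J). (sym_diff I J, J))"
  have left: "left p \<in> ?P" "left (left p) = p" if "p \<in> ?P" for p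
    using that overlapping_pairs_symdiff[OF assms(3)] by (auto simp: left_def split: prod.splits)
  have right: "right p \<in> ?P" "right (right p) = p" if "p \<in> ?P" for p
    using that overlapping_pairs_symdiff[OF assms(3)] by (auto simp: right_def split: prod.splits)
  have "(\<Sum>p\<in>?P. ?w (left p)) = (\<Sum>p\<in>?P. ?w p)"
    by (rule sum.reindex_bij_witness[of _ left left]) (use left in auto)
  moreover have "(\<Sum>p\<in>?P. ?w (right p)) = (\<Sum>p\<in>?P. ?w p)"
    by (rule sum.reindex_bij_witness[of _ right right]) (use right in auto)
  moreover have "(\<Sum>p\<in>?P. ?w p + ?w (left p) + ?w (right p)) = (\<Sum>p\<in>?P. -2)"
    using pair_weight_overlapping_triangle[OF assms(2-4)]
    by (intro sum.cong) (auto simp: left_def right_def)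
  ultimately show ?thesis
    by (simp add: sum.distrib)
qed

lemma sum_pair_weight:
  assumes "finite B" "building_set B" "symdiff_closed B" "consistent_choice B m"
  shows "(\<Sum>(I, J)\<in>B \<times> B. pair_weight m I J)
           = - real (card {(I, J) \<in> B \<times> B - overlapping_pairs B. I \<inter> J \<noteq> {}})
             - 2/3 * real (card (overlapping_pairs B))"
proof -
  let ?P = "overlapping_pairs B"
  have "?P \<subseteq> B \<times> B"
    by (auto simp: overlapping_pairs_def)
  then have "(\<Sum>(I, J)\<in>B \<times> B. pair_weight m I J)
      = (\<Sum>(I, J)\<in>B \<times> B - ?P. pair_weight m I J) + (\<Sum>(I, J)\<in>?P. pair_weight m I J)"
    using assms(1) by (simp add: sum.subset_diff)
  also have "(\<Sum>(I, J)\<in>B \<times> B - ?P. pair_weight m I J)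
      = (\<Sum>(I, J)\<in>B \<times> B - ?P. if I \<inter> J \<noteq> {} then -1 else 0)"
    using pair_weight_not_overlapping[OF assms(4)] by (intro sum.cong) auto
  also have "\<dots> = - real (card {(I, J) \<in> B \<times> B - ?P. I \<inter> J \<noteq> {}})"
    using assms(1) by (simp add: sum.inter_filter[symmetric] case_prod_unfold)
      (intro arg_cong[where f = card], auto)
  finally show ?thesis
    using sum_pair_weight_overlapping[OF assms] by simp
qed

definition coverage :: "'n::finite set set \<Rightarrow> real^'n" where
  "coverage B = (\<chi> i. \<Sum>I\<in>B. of_bool (i \<in> I))"

lemma norm_sum_axis_minus_coverage:
  fixes B :: "'n::finite set set"
  shows "(norm ((\<Sum>I\<in>B. axis (m I) 1) - coverage B))\<^sup>2
           = coverage B \<bullet> coverage B + (\<Sum>(I, J)\<in>B \<times> B. pair_weight m I J)"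
proof -
  let ?v = "\<Sum>I\<in>B. axis (m I) 1 :: real^'n" and ?c = "coverage B"
  have axis_inner: "axis i 1 \<bullet> (axis j 1 :: real^'n) = of_bool (j = i)" for i j
    by (simp add: inner_axis_axis)
  have vv: "?v \<bullet> ?v = (\<Sum>I\<in>B. \<Sum>J\<in>B. of_bool (m I = m J))"
    by (simp only: inner_sum_left inner_sum_right axis_inner)
  have vc: "?v \<bullet> ?c = (\<Sum>I\<in>B. \<Sum>J\<in>B. of_bool (m I \<in> J))"
    by (simp add: coverage_def inner_sum_left inner_axis')
  also have "\<dots> = (\<Sum>I\<in>B. \<Sum>J\<in>B. of_bool (m J \<in> I))"
    by (rule sum.swap)
  finally have "(\<Sum>(I, J)\<in>B \<times> B. pair_weight m I J) = ?v \<bullet> ?v - 2 * (?v \<bullet> ?c)"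
    using vv vc by (simp add: sum.cartesian_product[symmetric] pair_weight_def sum_subtractf)
  then show ?thesis
    by (simp add: power2_norm_eq_inner inner_diff_left inner_diff_right inner_commute)
qed

lemma extreme_point_of_nestohedron:
  fixes B :: "'n::finite set set"
  assumes "v extreme_point_of nestohedron B"
  obtains m where "consistent_choice B m" "v = (\<Sum>I\<in>B. axis (m I) 1)"
proof -
  have fin: "finite B" by simp
  obtain x where v: "v = sum x B" and x: "\<forall>I\<in>B. x I \<in> simplex_face I"
    using assms by (auto simp: extreme_point_of_def nestohedron_def)
  have ext: "sum x B extreme_point_of minkowski_sum B simplex_face"
    using assms v by (simp add: nestohedron_def minkowski_sum_def)
  have "\<exists>i\<in>I. x I = axis i 1" if "I \<in> B" for I
    using extreme_point_of_minkowski_sum_summand[OF fin that x ext] extreme_point_of_convex_hull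
    by (fastforce simp: simplex_face_def)
  then obtain m where m: "\<forall>I\<in>B. m I \<in> I \<and> x I = axis (m I) 1"
    by metis
  have "m I = m L" if IL: "I \<in> B" "L \<in> B" "I \<subseteq> L" "m L \<in> I" for I L
  proof (cases "I = L")
    case False
    have "x I \<in> simplex_face L" "x L \<in> simplex_face I"
      using m IL by (auto simp: simplex_face_def intro!: hull_inc)
    then have "x I = x L"
      using extreme_point_of_minkowski_sum_exchange[OF fin IL(1,2) x _ _ ext] by blast
    then show ?thesis
      using m IL by (simp add: axis_eq_axis)
  qed simp
  then have "consistent_choice B m"
    using m unfolding consistent_choice_def by blast
  moreover have "v = (\<Sum>I\<in>B. axis (m I) 1)"
    using m v by simp
  ultimately show thesis
    using that by blast
qed

theorem proposition4p22:
  fixes B :: "('n::finite) set set"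
  assumes "building_set B"
    and "symdiff_closed B"
  shows "inscribed (nestohedron B)"
proof -
  let ?c = "coverage B"
  define radius_sq where "radius_sq = ?c \<bullet> ?c
    - real (card {(I, J) \<in> B \<times> B - overlapping_pairs B. I \<inter> J \<noteq> {}})
    - 2/3 * real (card (overlapping_pairs B))"
  have "dist ?c v = sqrt radius_sq" if vertex: "v extreme_point_of nestohedron B" for v
  proof -
    obtain m where m: "consistent_choice B m" and v: "v = (\<Sum>I\<in>B. axis (m I) 1)"
      using extreme_point_of_nestohedron[OF vertex] .
    have "(dist ?c v)\<^sup>2 = radius_sq"
      using norm_sum_axis_minus_coverage[of m B] sum_pair_weight[OF _ assms m]
      by (simp add: radius_sq_def v dist_norm norm_minus_commute)
    then show ?thesis
      using real_sqrt_unique zero_le_dist by metis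
  qed
  then show ?thesis
    unfolding inscribed_def by blast
qed

end
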